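(* Let $\mathcal{H}$ be a class of functions $\mathcal{X}\to\{-1,+1\}$ with VC dimension $d\ge1$. For $h_1,h_2\in\mathcal{H}$ define $f[h_1,h_2]:\mathcal{X}\times\{-1,+1\}\to\{0,1\}$ by $f[h_1,h_2](x,y)=\mathbb{I}[h_1(x)=y\text{ or }h_2(x)=1]$. Then the VC dimension of $\mathcal{F}=\{f[h_1,h_2]:h_1,h_2\in\mathcal{H}\}$ is at most $10d$. *)

theory Defs
  imports Main "HOL-Library.Extended_Nat"
begin

definition shatters :: "('a \<Rightarrow> 'b) set \<Rightarrow> 'b set \<Rightarrow> 'a set \<Rightarrow> bool" where
  "shatters C V S \<longleftrightarrow>
     (\<forall>g. (\<forall>x\<in>S. g x \<in> V) \<longrightarrow> (\<exists>c\<in>C. \<forall>x\<in>S. c x = g x))"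

definition vc_dim :: "'a set \<Rightarrow> 'b set \<Rightarrow> ('a \<Rightarrow> 'b) set \<Rightarrow> enat" where
  "vc_dim D V C = Sup {enat (card S) | S. S \<subseteq> D \<and> finite S \<and> shatters C V S}"

definition fpair :: "('a \<Rightarrow> int) \<Rightarrow> ('a \<Rightarrow> int) \<Rightarrow> ('a \<times> int \<Rightarrow> nat)" where
  "fpair h1 h2 = (\<lambda>(x, y). if h1 x = y \<or> h2 x = 1 then 1 else 0)"

end

theory Submission
  imports Defs Complex_Main
begin

text \<open>If \<open>F\<close> shatters a finite \<open>S \<subseteq> X \<times> {-1, 1}\<close>, every subset of \<open>S\<close> has the form
  \<open>{(x, y) \<in> S. (y = 1 \<longleftrightarrow> x \<in> A) \<or> x \<in> B}\<close> with \<open>A\<close>, \<open>B\<close> traces of members of \<open>H\<close> on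
  the projection of \<open>S\<close>. By the Sauer--Shelah lemma, which follows from Pajor's inequality (a
  family has at most as many members as it shatters sets), \<open>H\<close> has at most
  \<open>\<Phi> = (\<Sum>i\<le>d. card S choose i)\<close> traces there, so \<open>2 ^ card S \<le> \<Phi>\<^sup>2\<close>.
  Since \<open>\<Phi> \<le> (e card S / d) ^ d\<close>, this fails for \<open>card S = 10 d + 1\<close>.\<close>

definition shattered_sets :: "'a set set \<Rightarrow> 'a set \<Rightarrow> 'a set set" where
  "shattered_sets CC X = {Z. Z \<subseteq> X \<and> (\<forall>Y\<subseteq>Z. \<exists>C\<in>CC. C \<inter> Z = Y)}"

lemma shattered_sets_subset_Pow: "shattered_sets CC X \<subseteq> Pow X"
  by (auto simp: shattered_sets_def)

lemma shattered_sets_image_Diff_subset: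
  assumes "x \<notin> X"
  shows "shattered_sets ((\<lambda>C. C - {x}) ` CC) X \<subseteq> shattered_sets CC (insert x X)"
proof
  fix Z assume "Z \<in> shattered_sets ((\<lambda>C. C - {x}) ` CC) X"
  then have Z: "Z \<subseteq> X" and sh: "\<forall>Y\<subseteq>Z. \<exists>C\<in>CC. (C - {x}) \<inter> Z = Y"
    by (auto simp: shattered_sets_def)
  have "(C - {x}) \<inter> Z = C \<inter> Z" for C using Z assms by blast
  then show "Z \<in> shattered_sets CC (insert x X)"
    using Z sh by (auto simp: shattered_sets_def)
qed

lemma insert_image_shattered_sets_subset:
  assumes "x \<notin> X"
  shows "insert x ` shattered_sets {C\<in>CC. x \<notin> C \<and> insert x C \<in> CC} X
           \<subseteq> shattered_sets CC (insert x X)"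
proof
  fix W assume "W \<in> insert x ` shattered_sets {C\<in>CC. x \<notin> C \<and> insert x C \<in> CC} X"
  then obtain Z where W: "W = insert x Z"
    and "Z \<in> shattered_sets {C\<in>CC. x \<notin> C \<and> insert x C \<in> CC} X" by blast
  then have Z: "Z \<subseteq> X"
    and sh: "\<forall>Y\<subseteq>Z. \<exists>C\<in>CC. x \<notin> C \<and> insert x C \<in> CC \<and> C \<inter> Z = Y"
    unfolding shattered_sets_def by blast+
  have "\<exists>C\<in>CC. C \<inter> W = Y" if "Y \<subseteq> W" for Y
  proof (cases "x \<in> Y")
    case True
    then obtain C where "insert x C \<in> CC" "C \<inter> Z = Y - {x}"
      using sh \<open>Y \<subseteq> W\<close> W by (metis Diff_subset_conv insert_is_Un)
    then show ?thesis using True W by (intro bexI[of _ "insert x C"]) auto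
  next
    case False
    then obtain C where "C \<in> CC" "x \<notin> C" "C \<inter> Z = Y"
      using sh \<open>Y \<subseteq> W\<close> W by (metis subset_insert)
    then show ?thesis using W by auto
  qed
  then show "W \<in> shattered_sets CC (insert x X)"
    using W Z by (auto simp: shattered_sets_def)
qed

lemma card_eq_card_image_Diff_plus:
  assumes "finite CC"
  shows "card CC = card ((\<lambda>C. C - {x}) ` CC) + card {C\<in>CC. x \<notin> C \<and> insert x C \<in> CC}"
proof -
  define Ca where "Ca = {C\<in>CC. x \<notin> C}"
  define Cb where "Cb = {C\<in>CC. x \<in> C}"
  define R where "R = (\<lambda>C. C - {x}) ` Cb"
  have fin: "finite Ca" "finite Cb" "finite R" using assms by (auto simp: Ca_def Cb_def R_def)
  have CC: "CC = Ca \<union> Cb" by (auto simp: Ca_def Cb_def)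
  have "card CC = card Ca + card Cb"
    unfolding CC using fin by (intro card_Un_disjoint) (auto simp: Ca_def Cb_def)
  moreover have "card R = card Cb"
    unfolding R_def by (rule card_image) (auto simp: inj_on_def Cb_def)
  moreover have "(\<lambda>C. C - {x}) ` Ca = Ca" by (force simp: Ca_def)
  then have "(\<lambda>C. C - {x}) ` CC = Ca \<union> R" unfolding CC R_def by (simp add: image_Un)
  moreover have "{C\<in>CC. x \<notin> C \<and> insert x C \<in> CC} = Ca \<inter> R"
  proof (intro set_eqI iffI)
    fix C assume "C \<in> {C\<in>CC. x \<notin> C \<and> insert x C \<in> CC}"
    then show "C \<in> Ca \<inter> R"
      unfolding Ca_def Cb_def R_def by (auto intro!: rev_image_eqI[of "insert x C"])
  next
    fix C assume "C \<in> Ca \<inter> R"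
    then show "C \<in> {C\<in>CC. x \<notin> C \<and> insert x C \<in> CC}"
      unfolding Ca_def Cb_def R_def by (auto simp: insert_absorb)
  qed
  ultimately show ?thesis using card_Un_Int[OF fin(1,3)] by simp
qed

lemma card_le_card_shattered_sets:
  assumes "finite X" "CC \<subseteq> Pow X"
  shows "card CC \<le> card (shattered_sets CC X)"
  using assms
proof (induction X arbitrary: CC rule: finite_induct)
  case empty
  have "shattered_sets {{}} {} = {{}}" by (auto simp: shattered_sets_def)
  moreover have "CC = {} \<or> CC = {{}}" using empty by (simp add: subset_singleton_iff)
  ultimately show ?case by (metis card.empty le_refl zero_le)
next
  case (insert x X)
  define C1 where "C1 = (\<lambda>C. C - {x}) ` CC"
  define C2 where "C2 = {C\<in>CC. x \<notin> C \<and> insert x C \<in> CC}"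
  have "C1 \<subseteq> Pow X" "C2 \<subseteq> Pow X" using insert.prems by (auto simp: C1_def C2_def)
  note IH = this[THEN insert.IH]
  have disj: "shattered_sets C1 X \<inter> insert x ` shattered_sets C2 X = {}"
    using shattered_sets_subset_Pow insert.hyps(2) by blast
  have "inj_on (insert x) (shattered_sets C2 X)"
  proof (rule inj_onI)
    fix A B assume "A \<in> shattered_sets C2 X" "B \<in> shattered_sets C2 X" "insert x A = insert x B"
    moreover from this have "x \<notin> A" "x \<notin> B" using shattered_sets_subset_Pow insert.hyps(2) by blast+
    ultimately show "A = B" by (simp add: insert_ident)
  qed
  then have card_insert: "card (insert x ` shattered_sets C2 X) = card (shattered_sets C2 X)"
    by (rule card_image)
  have fin: "finite (shattered_sets C X')" if "finite X'" for C and X' :: "'a set"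
    using shattered_sets_subset_Pow[of C X'] that by (meson finite_Pow_iff finite_subset)
  have "finite CC"
    using insert.prems by (rule finite_subset) (simp add: insert.hyps(1))
  then have "card CC = card C1 + card C2"
    unfolding C1_def C2_def by (rule card_eq_card_image_Diff_plus)
  also have "\<dots> \<le> card (shattered_sets C1 X \<union> insert x ` shattered_sets C2 X)"
    using IH disj card_insert fin[OF insert.hyps(1)] by (simp add: card_Un_disjoint)
  also have "\<dots> \<le> card (shattered_sets CC (insert x X))"
    using shattered_sets_image_Diff_subset[OF insert.hyps(2), of CC]
      insert_image_shattered_sets_subset[OF insert.hyps(2), of CC]
      fin[of "insert x X"] insert.hyps(1)
    unfolding C1_def C2_def by (intro card_mono) auto
  finally show ?case .
qed

lemma card_subsets_card_le:
  assumes "finite X"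
  shows "card {Z. Z \<subseteq> X \<and> card Z \<le> d} = (\<Sum>i\<le>d. card X choose i)"
proof -
  have "{Z. Z \<subseteq> X \<and> card Z \<le> d} = (\<Union>i\<le>d. {Z. Z \<subseteq> X \<and> card Z = i})" by auto
  also have "card \<dots> = (\<Sum>i\<le>d. card {Z. Z \<subseteq> X \<and> card Z = i})"
    using assms by (intro card_UN_disjoint) (auto intro: finite_subset[of _ "Pow X"])
  finally show ?thesis using n_subsets[OF assms] by simp
qed

lemma sauer_shelah:
  assumes "finite X" "CC \<subseteq> Pow X" "\<And>Z. Z \<in> shattered_sets CC X \<Longrightarrow> card Z \<le> d"
  shows "card CC \<le> (\<Sum>i\<le>d. card X choose i)"
proof -
  have "card CC \<le> card (shattered_sets CC X)"
    using assms(1,2) by (rule card_le_card_shattered_sets)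
  also have "\<dots> \<le> card {Z. Z \<subseteq> X \<and> card Z \<le> d}"
    using assms shattered_sets_subset_Pow[of CC X] by (intro card_mono) auto
  finally show ?thesis using card_subsets_card_le[OF assms(1)] by simp
qed

lemma sum_binomial_le_exp:
  assumes "1 \<le> d" "d \<le> n"
  shows "real (\<Sum>i\<le>d. n choose i) \<le> (real n / d) ^ d * exp d"
proof -
  \<comment> \<open>weight the binomial sum by \<open>x\<^sup>i\<^sup>-\<^sup>d \<ge> 1\<close> and complete it to \<open>(1 + x)\<^sup>n \<le> e\<^sup>d\<close>\<close>
  define x where "x = real d / n"
  have x: "0 < x" "x \<le> 1" "real n * x = d" using assms by (auto simp: x_def)
  have "real (\<Sum>i\<le>d. n choose i) \<le> (\<Sum>i\<le>d. (real n / d) ^ d * (real (n choose i) * x ^ i))"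
    unfolding of_nat_sum
  proof (rule sum_mono)
    fix i assume "i \<in> {..d}"
    then have "x ^ d \<le> x ^ i" using x by (intro power_decreasing) auto
    then have "1 \<le> (real n / d) ^ d * x ^ i"
      using x assms by (simp add: x_def power_divide field_simps)
    then have "real (n choose i) * 1 \<le> real (n choose i) * ((real n / d) ^ d * x ^ i)"
      by (intro mult_left_mono) auto
    then show "real (n choose i) \<le> (real n / d) ^ d * (real (n choose i) * x ^ i)"
      by (simp add: ac_simps)
  qed
  also have "\<dots> = (real n / d) ^ d * (\<Sum>i\<le>d. real (n choose i) * x ^ i)"
    by (simp add: sum_distrib_left)
  also have "(\<Sum>i\<le>d. real (n choose i) * x ^ i) \<le> (\<Sum>i\<le>n. real (n choose i) * x ^ i)"
    using assms x by (intro sum_mono2) auto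
  also have "\<dots> = (x + 1) ^ n" by (simp add: binomial_ring)
  also have "\<dots> \<le> exp x ^ n" using x by (intro power_mono) (auto simp: add.commute)
  also have "\<dots> = exp d" using x by (simp add: exp_of_nat_mult[symmetric])
  finally show ?thesis using assms by (simp add: mult_left_mono)
qed

lemma sum_binomial_squared_less_pow2:
  assumes "1 \<le> d"
  shows "(\<Sum>i\<le>d. (10 * d + 1) choose i) ^ 2 < (2::nat) ^ (10 * d + 1)"
proof (cases "d = 1")
  case True
  then show ?thesis by (simp add: atMost_Suc)
next
  case False
  then have d: "2 \<le> d" using assms by simp
  define a where "a = real (10 * d + 1) / d"
  have "a \<le> 10.5" using d by (simp add: a_def field_simps)
  then have "a * exp 1 \<le> 10.5 * 3"
    using exp_le by (intro mult_mono) (auto simp: a_def)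
  then have "(a * exp 1) ^ 2 \<le> 31.5 ^ 2"
    by (intro power_mono) (auto simp: a_def)
  then have ae: "(a * exp 1) ^ 2 \<le> 992.25"
    by (simp add: power2_eq_square)
  have "exp (real d) = exp 1 ^ d" by (metis exp_of_nat_mult mult.right_neutral)
  have "real (\<Sum>i\<le>d. (10 * d + 1) choose i) ^ 2 \<le> (a ^ d * exp d) ^ 2"
    using sum_binomial_le_exp[of d "10 * d + 1"] d unfolding a_def
    by (intro power_mono) (auto simp: sum_nonneg)
  also have "\<dots> = ((a * exp 1) ^ 2) ^ d"
    using \<open>exp (real d) = exp 1 ^ d\<close>
    by (simp add: power_mult_distrib power_mult[symmetric] mult.commute)
  also have "\<dots> \<le> 992.25 ^ d" using ae by (intro power_mono) auto
  also have "\<dots> < 1024 ^ d" using d by (intro power_strict_mono) auto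
  also have "\<dots> = 2 ^ (10 * d)" by (simp add: power_mult)
  also have "\<dots> < 2 ^ (10 * d + 1)" by simp
  finally have "real ((\<Sum>i\<le>d. (10 * d + 1) choose i) ^ 2) < real (2 ^ (10 * d + 1))"
    by simp
  then show ?thesis by (rule of_nat_less_imp_less)
qed

lemma shatters_subset:
  assumes "shatters C V S" "T \<subseteq> S" "v \<in> V"
  shows "shatters C V T"
  unfolding shatters_def
proof (intro allI impI)
  fix g assume "\<forall>x\<in>T. g x \<in> V"
  then have "\<forall>x\<in>S. (if x \<in> T then g x else v) \<in> V" using assms(3) by simp
  then obtain c where c: "c \<in> C" "\<forall>x\<in>S. c x = (if x \<in> T then g x else v)"
    using assms(1) unfolding shatters_def by (auto dest!: spec[of _ "\<lambda>x. if x \<in> T then g x else v"])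
  have "\<forall>x\<in>T. c x = g x" using c(2) assms(2) by auto
  then show "\<exists>c\<in>C. \<forall>x\<in>T. c x = g x" using c(1) by blast
qed

lemma Pow_subset_image_if_shatters:
  assumes "shatters F {0, 1 :: 'b :: zero_neq_one} S"
  shows "Pow S \<subseteq> (\<lambda>f. {s\<in>S. f s = 1}) ` F"
proof
  fix A assume "A \<in> Pow S"
  obtain f where "f \<in> F" "\<forall>s\<in>S. f s = (if s \<in> A then 1 else 0)"
    using assms unfolding shatters_def by (auto dest!: spec[of _ "\<lambda>s. if s \<in> A then 1 else 0"])
  then have "A = {s\<in>S. f s = 1}" using \<open>A \<in> Pow S\<close> by (auto split: if_splits)
  then show "A \<in> (\<lambda>f. {s\<in>S. f s = 1}) ` F" using \<open>f \<in> F\<close> by blast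
qed

lemma vc_dim_le_enat:
  assumes "\<And>S. S \<subseteq> D \<Longrightarrow> finite S \<Longrightarrow> shatters C V S \<Longrightarrow> card S \<le> n"
  shows "vc_dim D V C \<le> enat n"
  unfolding vc_dim_def using assms by (auto intro!: Sup_least)

lemma card_le_vc_dim:
  assumes "S \<subseteq> D" "finite S" "shatters C V S"
  shows "enat (card S) \<le> vc_dim D V C"
  unfolding vc_dim_def using assms by (intro Sup_upper) blast

definition trace_on :: "'a set \<Rightarrow> ('a \<Rightarrow> int) \<Rightarrow> 'a set" where
  "trace_on X h = {x\<in>X. h x = 1}"

lemma shatters_if_in_shattered_sets_traces:
  assumes "\<forall>h\<in>H. \<forall>x. h x \<in> {-1, 1}" "Z \<in> shattered_sets (trace_on X ` H) X"
  shows "shatters H {-1, 1} Z"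
  unfolding shatters_def
proof (intro allI impI)
  fix g :: "'a \<Rightarrow> int" assume g: "\<forall>x\<in>Z. g x \<in> {-1, 1}"
  have "Z \<subseteq> X" "{x\<in>Z. g x = 1} \<subseteq> Z" using assms(2) by (auto simp: shattered_sets_def)
  then obtain h where h: "h \<in> H" "trace_on X h \<inter> Z = {x\<in>Z. g x = 1}"
    using assms(2) unfolding shattered_sets_def by blast
  have "h x = g x" if "x \<in> Z" for x
  proof -
    have "h x = 1 \<longleftrightarrow> g x = 1" using h(2) that \<open>Z \<subseteq> X\<close> unfolding trace_on_def by blast
    moreover have "h x \<in> {-1, 1}" "g x \<in> {-1, 1}" using assms(1) h(1) g that by blast+
    ultimately show ?thesis by auto
  qed
  then show "\<exists>c\<in>H. \<forall>x\<in>Z. c x = g x" using h(1) by blast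
qed

lemma card_traces_le_sum_binomial:
  assumes "\<forall>h\<in>H. \<forall>x. h x \<in> {-1, 1}"
    and "\<And>Z. finite Z \<Longrightarrow> shatters H {-1, 1} Z \<Longrightarrow> card Z \<le> d"
    and "finite X"
  shows "card (trace_on X ` H) \<le> (\<Sum>i\<le>d. card X choose i)"
proof (rule sauer_shelah[OF assms(3)])
  show "trace_on X ` H \<subseteq> Pow X" by (auto simp: trace_on_def)
  fix Z assume Z: "Z \<in> shattered_sets (trace_on X ` H) X"
  then have "Z \<subseteq> X" using shattered_sets_subset_Pow by blast
  then have "finite Z" using assms(3) by (rule finite_subset)
  moreover have "shatters H {-1, 1} Z"
    using assms(1) Z by (rule shatters_if_in_shattered_sets_traces)
  ultimately show "card Z \<le> d" by (rule assms(2))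
qed

lemma fpair_eq_1_iff_traces:
  assumes "\<forall>x. h1 x \<in> {-1, 1}" "(x, y) \<in> S" "S \<subseteq> UNIV \<times> {-1, 1}"
  shows "fpair h1 h2 (x, y) = 1 \<longleftrightarrow>
           (y = 1 \<longleftrightarrow> x \<in> trace_on (fst ` S) h1) \<or> x \<in> trace_on (fst ` S) h2"
proof -
  have "x \<in> fst ` S" "y \<in> {-1, 1}" "h1 x \<in> {-1, 1}" using assms by force+
  then show ?thesis by (auto simp: fpair_def trace_on_def)
qed

lemma pow2_card_le_sum_binomial_squared:
  fixes H :: "('a \<Rightarrow> int) set" and S :: "('a \<times> int) set"
  assumes H_values: "\<forall>h\<in>H. \<forall>x. h x \<in> {-1, 1}"
    and H_shatters: "\<And>Z. finite Z \<Longrightarrow> shatters H {-1, 1} Z \<Longrightarrow> card Z \<le> d"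
    and "finite S" "S \<subseteq> UNIV \<times> {-1, 1}"
    and "shatters {fpair h1 h2 | h1 h2. h1 \<in> H \<and> h2 \<in> H} {0, 1} S"
  shows "2 ^ card S \<le> (\<Sum>i\<le>d. card S choose i) ^ 2"
proof -
  define TT where "TT = trace_on (fst ` S) ` H"
  define G where "G = (\<lambda>(A, B). {(x, y)\<in>S. (y = 1 \<longleftrightarrow> x \<in> A) \<or> x \<in> B})"
  have "Pow S \<subseteq> G ` (TT \<times> TT)"
  proof
    fix A assume "A \<in> Pow S"
    then obtain h1 h2 where "h1 \<in> H" "h2 \<in> H" "A = {s\<in>S. fpair h1 h2 s = 1}"
      using Pow_subset_image_if_shatters[OF assms(5)] by blast
    moreover have "{s\<in>S. fpair h1 h2 s = 1} = G (trace_on (fst ` S) h1, trace_on (fst ` S) h2)"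
      using fpair_eq_1_iff_traces[of h1 _ _ S h2] H_values \<open>h1 \<in> H\<close> assms(4)
      by (auto simp: G_def)
    ultimately show "A \<in> G ` (TT \<times> TT)" by (auto simp: TT_def)
  qed
  have "TT \<subseteq> Pow (fst ` S)" by (auto simp: TT_def trace_on_def)
  then have fin: "finite TT" using assms(3) by (meson finite_Pow_iff finite_imageI finite_subset)
  have "2 ^ card S = card (Pow S)" using assms(3) by (simp add: card_Pow)
  also have "\<dots> \<le> card (G ` (TT \<times> TT))"
    using \<open>Pow S \<subseteq> G ` (TT \<times> TT)\<close> fin by (intro card_mono) auto
  also have "\<dots> \<le> card TT ^ 2"
    using card_image_le[of "TT \<times> TT" G] fin by (simp add: card_cartesian_product power2_eq_square)
  also have "card TT \<le> (\<Sum>i\<le>d. card (fst ` S) choose i)"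
    unfolding TT_def using H_values H_shatters assms(3) by (intro card_traces_le_sum_binomial) auto
  also have "\<dots> \<le> (\<Sum>i\<le>d. card S choose i)"
    using card_image_le[OF assms(3), of fst] by (intro sum_mono binomial_right_mono)
  finally show ?thesis by (simp add: power_mono)
qed

theorem lemma6:
  fixes H :: "('a \<Rightarrow> int) set" and d :: nat
  assumes "\<forall>h\<in>H. \<forall>x. h x \<in> {-1, 1}"
    and "vc_dim (UNIV :: 'a set) {-1, 1} H = enat d"
    and "d \<ge> 1"
  shows "vc_dim (UNIV \<times> {-1, 1}) {0, 1} {fpair h1 h2 | h1 h2. h1 \<in> H \<and> h2 \<in> H}
           \<le> enat (10 * d)"
proof (rule vc_dim_le_enat, rule ccontr)
  fix S assume S: "S \<subseteq> UNIV \<times> {-1, 1}" "finite S"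
    "shatters {fpair h1 h2 | h1 h2. h1 \<in> H \<and> h2 \<in> H} {0, 1} S" and "\<not> card S \<le> 10 * d"
  then have "10 * d + 1 \<le> card S" by simp
  then obtain S' where "S' \<subseteq> S" "card S' = 10 * d + 1" "finite S'"
    by (rule obtain_subset_with_card_n)
  have H_shatters: "card Z \<le> d" if "finite Z" "shatters H {-1, 1} Z" for Z
    using card_le_vc_dim[OF subset_UNIV that] assms(2) by simp
  have "shatters {fpair h1 h2 | h1 h2. h1 \<in> H \<and> h2 \<in> H} {0, 1} S'"
    using shatters_subset[OF S(3) \<open>S' \<subseteq> S\<close>, of 0] by simp
  then have "2 ^ card S' \<le> (\<Sum>i\<le>d. card S' choose i) ^ 2"
    using pow2_card_le_sum_binomial_squared[OF assms(1) H_shatters \<open>finite S'\<close>] S(1) \<open>S' \<subseteq> S\<close>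
    by blast
  then show False
    using sum_binomial_squared_less_pow2[OF assms(3)] \<open>card S' = 10 * d + 1\<close> by simp
qed

end
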